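(* Let $p\geq 3$ be prime and $k\geq 1$ an integer. Then $c_{\mathrm{poly}}(p^k)=k+1$ and $c_{\mathrm{poly}}(2p^k)=2(k+1)$.
   Context: $S(\mathbb{Z}_n)$ is the set of bijections $\mathbb{Z}_n\to\mathbb{Z}_n$, and $S_{\mathrm{poly}}(\mathbb{Z}_n)$ is the set of $\pi\in S(\mathbb{Z}_n)$ for which there is a polynomial $f\in\mathbb{Z}_n[x]$ with $\pi(x)=f(x)$ for all $x\in\mathbb{Z}_n$. $\mathrm{cyc}(\pi)$ is the number of cycles (including fixed points) of $\pi$. Define $c_{\mathrm{poly}}(n)=\min_{\pi\in S_{\mathrm{poly}}(\mathbb{Z}_n)}\max_{k\in\mathbb{Z}_n}\mathrm{cyc}(x\mapsto\pi(x+k))$. *)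

theory Defs
  imports "HOL-Computational_Algebra.Polynomial"
begin

text \<open>Z_n is modelled by the carrier {0..<n} of natural numbers, arithmetic mod n.\<close>

definition perm_Zn :: "nat \<Rightarrow> (nat \<Rightarrow> nat) \<Rightarrow> bool" where
  "perm_Zn n \<pi> \<longleftrightarrow> bij_betw \<pi> {0..<n} {0..<n}"

text \<open>pi is induced by a polynomial over Z_n (coefficients lifted to integers).\<close>
definition poly_perm_Zn :: "nat \<Rightarrow> (nat \<Rightarrow> nat) \<Rightarrow> bool" where
  "poly_perm_Zn n \<pi> \<longleftrightarrow> perm_Zn n \<pi> \<and>
     (\<exists>f :: int poly. \<forall>x<n. int (\<pi> x) = poly f (int x) mod int n)"

definition cyc :: "nat \<Rightarrow> (nat \<Rightarrow> nat) \<Rightarrow> nat" where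
  "cyc n \<sigma> = card ((\<lambda>x. {(\<sigma> ^^ m) x | m. True}) ` {0..<n})"

definition shift_perm :: "nat \<Rightarrow> (nat \<Rightarrow> nat) \<Rightarrow> nat \<Rightarrow> nat \<Rightarrow> nat" where
  "shift_perm n \<pi> k = (\<lambda>x. \<pi> ((x + k) mod n))"

definition c_poly :: "nat \<Rightarrow> nat" where
  "c_poly n = (LEAST c. \<exists>\<pi>. poly_perm_Zn n \<pi> \<and>
       c = Max ((\<lambda>k. cyc n (shift_perm n \<pi> k)) ` {0..<n}))"

end

theory Submission
  imports Defs "HOL-Number_Theory.Number_Theory" "HOL-Combinatorics.Orbits"
begin

text \<open>
  Lower bound: a polynomial respects congruences modulo every divisor \<open>d\<close> of \<open>n\<close>, and a
  permutation of \<open>Z_n\<close> doing so permutes the residues modulo \<open>d\<close>. Once a shift makes \<open>0\<close> a fixed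
  point, \<open>d\<close> divides \<open>\<pi> x\<close> iff it divides \<open>x\<close>, so \<open>gcd x n\<close> is constant on cycles and some shift
  has at least as many cycles as \<open>n\<close> has divisors.

  Upper bound for \<open>n = q p^k\<close> with \<open>q \<in> {1, 2}\<close>: take \<open>\<pi> x = a x\<close> for an odd primitive root \<open>a\<close>
  modulo \<open>p^k\<close>. Every shift is affine, \<open>x \<mapsto> a x + b\<close>, and as \<open>a - 1\<close> is a unit modulo \<open>p^k\<close>
  its iterates are \<open>x0 + a^m (x - x0) + m e\<close> with \<open>p^k\<close> dividing \<open>e\<close>. Every residue modulo \<open>p^k\<close>
  is \<open>p^j\<close> times a power of \<open>a\<close>, so the points \<open>x0 + p^j + t p^k\<close> (\<open>j \<le> k\<close>, \<open>t < q\<close>) meet all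
  cycles, \<open>t\<close> fixing the parity when \<open>q = 2\<close>. This gives at most \<open>q (k + 1)\<close> cycles, the number
  of divisors of \<open>n\<close>.
\<close>

section \<open>Cycles as orbits\<close>

lemma orbit_eq_if_self_in_orbit:
  assumes "t \<in> orbit f s" "s \<in> orbit f s"
  shows "orbit f t = orbit f s"
  using assms by (auto intro: orbit_trans orbit_swap)

lemma self_in_orbit_if_bij_betw:
  assumes "finite A" "bij_betw \<sigma> A A" "x \<in> A"
  shows "x \<in> orbit \<sigma> x"
proof -
  have "bij_betw (perm_restrict \<sigma> A) A A"
    using assms(2) by (rule bij_betw_cong[THEN iffD1, rotated]) (simp add: perm_restrict_def)
  then have "perm_restrict \<sigma> A permutes A"
    by (rule bij_imp_permutes) (simp add: perm_restrict_def)
  then have "x \<in> orbit (perm_restrict \<sigma> A) x"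
    using assms(1) by (intro permutation_self_in_orbit) (auto simp: permutation_permutes)
  also have "orbit (perm_restrict \<sigma> A) x = orbit \<sigma> x"
    using assms(2,3) bij_betw_apply[OF assms(2)] by (intro orbit_cong0) (auto simp: perm_restrict_def)
  finally show ?thesis .
qed

lemma cyc_eq_card_orbits:
  assumes "bij_betw \<sigma> {0..<n} {0..<n}"
  shows "cyc n \<sigma> = card (orbit \<sigma> ` {0..<n})"
proof -
  have "(\<lambda>x. {(\<sigma> ^^ m) x | m. True}) ` {0..<n} = orbit \<sigma> ` {0..<n}"
  proof (rule image_cong)
    show "{(\<sigma> ^^ m) x | m. True} = orbit \<sigma> x" if "x \<in> {0..<n}" for x
      using orbit_altdef_self_in[OF self_in_orbit_if_bij_betw[OF _ assms that]] by simp
  qed simp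
  then show ?thesis
    by (simp add: cyc_def)
qed

lemma cyc_le_card_if_orbits_cover:
  assumes bij: "bij_betw \<sigma> {0..<n} {0..<n}" and R: "R \<subseteq> {0..<n}"
    and cover: "\<And>x. x < n \<Longrightarrow> \<exists>r\<in>R. \<exists>m. (\<sigma> ^^ m) r = x"
  shows "cyc n \<sigma> \<le> card R"
proof -
  have "orbit \<sigma> x \<in> orbit \<sigma> ` R" if "x < n" for x
  proof -
    obtain r m where r: "r \<in> R" "(\<sigma> ^^ m) r = x"
      using cover \<open>x < n\<close> by blast
    have self: "r \<in> orbit \<sigma> r"
      using R r(1) by (intro self_in_orbit_if_bij_betw[OF _ bij]) auto
    with r(2) have "x \<in> orbit \<sigma> r"
      by (auto simp: orbit_altdef_self_in[OF self])
    then have "orbit \<sigma> x = orbit \<sigma> r"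
      using self by (rule orbit_eq_if_self_in_orbit)
    with r(1) show ?thesis
      by (metis imageI)
  qed
  moreover have "finite R"
    using R finite_subset by blast
  ultimately have "card (orbit \<sigma> ` {0..<n}) \<le> card (orbit \<sigma> ` R)"
    by (intro card_mono) auto
  also have "\<dots> \<le> card R"
    using \<open>finite R\<close> by (rule card_image_le)
  finally show ?thesis
    by (simp add: cyc_eq_card_orbits[OF bij])
qed

lemma card_image_le_cyc_if_invariant:
  assumes bij: "bij_betw \<sigma> {0..<n} {0..<n}" and inv: "\<And>x. x < n \<Longrightarrow> f (\<sigma> x) = f x"
  shows "card (f ` {0..<n}) \<le> cyc n \<sigma>"
proof -
  have closed: "\<sigma> x < n" if "x < n" for x
    using bij_betw_apply[OF bij] that by simp
  have orbit_inv: "y < n \<and> f y = f x" if "y \<in> orbit \<sigma> x" "x < n" for x y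
    using that by induction (simp_all add: inv closed)
  define g where "g Q = f (SOME y. y \<in> Q)" for Q
  have "f x = g (orbit \<sigma> x)" if "x < n" for x
  proof -
    have "(SOME y. y \<in> orbit \<sigma> x) \<in> orbit \<sigma> x"
      using orbit_nonempty by (simp add: some_in_eq)
    then show ?thesis
      using orbit_inv that by (simp add: g_def)
  qed
  then have "f ` {0..<n} = g ` orbit \<sigma> ` {0..<n}"
    by (auto simp: image_image)
  also have "card \<dots> \<le> card (orbit \<sigma> ` {0..<n})"
    by (rule card_image_le) simp
  finally show ?thesis
    by (simp add: cyc_eq_card_orbits[OF bij])
qed

section \<open>Polynomial permutations and the divisor bound\<close>

lemma poly_cong:
  fixes x y :: "'a :: unique_euclidean_semiring"
  assumes "[x = y] (mod d)"
  shows "[poly f x = poly f y] (mod d)"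
  by (induction f) (simp_all add: cong_add cong_mult assms)

lemma bij_betw_add_mod: "bij_betw (\<lambda>x. (x + c) mod n) {0..<n} {0..<(n::nat)}"
proof -
  have "inj_on (\<lambda>x. (x + c) mod n) {0..<n}"
  proof (rule inj_onI)
    fix x y assume "x \<in> {0..<n}" "y \<in> {0..<n}" "(x + c) mod n = (y + c) mod n"
    then show "x = y"
      by (simp add: cong_def[symmetric] cong_add_rcancel_nat) (simp add: cong_def)
  qed
  then show ?thesis
    by (simp add: bij_betw_def endo_inj_surj image_subset_iff)
qed

lemma poly_perm_Zn_mult:
  assumes "coprime a n"
  shows "poly_perm_Zn n (\<lambda>x. a * x mod n)"
proof -
  have "inj_on (\<lambda>x. a * x mod n) {0..<n}"
  proof (rule inj_onI)
    fix x y assume "x \<in> {0..<n}" "y \<in> {0..<n}" "a * x mod n = a * y mod n"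
    then show "x = y"
      using assms by (simp add: cong_def[symmetric] cong_mult_lcancel_nat) (simp add: cong_def)
  qed
  then have "bij_betw (\<lambda>x. a * x mod n) {0..<n} {0..<n}"
    by (simp add: bij_betw_def endo_inj_surj image_subset_iff)
  moreover have "\<forall>x<n. int (a * x mod n) = poly [:0, int a:] (int x) mod int n"
    by (simp add: of_nat_mod mult.commute)
  ultimately show ?thesis
    unfolding poly_perm_Zn_def perm_Zn_def by blast
qed

lemma poly_perm_Zn_shift_perm:
  assumes "poly_perm_Zn n \<pi>"
  shows "poly_perm_Zn n (shift_perm n \<pi> c)"
proof -
  obtain f where f: "\<And>x. x < n \<Longrightarrow> int (\<pi> x) = poly f (int x) mod int n"
    using assms by (auto simp: poly_perm_Zn_def)
  have "int (shift_perm n \<pi> c x) = poly (pcompose f [:int c, 1:]) (int x) mod int n"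
    if "x < n" for x
  proof -
    have "int (shift_perm n \<pi> c x) = poly f (int ((x + c) mod n)) mod int n"
      using f[of "(x + c) mod n"] that by (simp add: shift_perm_def)
    also have "\<dots> = poly f (int x + int c) mod int n"
      using poly_cong[of "int ((x + c) mod n)" "int x + int c" "int n" f]
      by (simp add: cong_def of_nat_mod)
    also have "\<dots> = poly (pcompose f [:int c, 1:]) (int x) mod int n"
      by (simp add: poly_pcompose add.commute)
    finally show ?thesis .
  qed
  moreover have "bij_betw (shift_perm n \<pi> c) {0..<n} {0..<n}"
    using bij_betw_trans[OF bij_betw_add_mod, of \<pi> n] assms
    by (simp add: poly_perm_Zn_def perm_Zn_def shift_perm_def comp_def)
  ultimately show ?thesis
    unfolding poly_perm_Zn_def perm_Zn_def by blast
qed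

lemma poly_perm_Zn_cong:
  assumes "poly_perm_Zn n \<pi>" "d dvd n" "x < n" "y < n" "[x = y] (mod d)"
  shows "[\<pi> x = \<pi> y] (mod d)"
proof -
  obtain f where f: "\<And>x. x < n \<Longrightarrow> int (\<pi> x) = poly f (int x) mod int n"
    using assms(1) by (auto simp: poly_perm_Zn_def)
  have "[int (\<pi> z) = poly f (int z)] (mod int d)" if "z < n" for z
    using f[OF that] assms(2) by (metis cong_mod_left cong_refl cong_dvd_modulus int_dvd_int_iff)
  moreover have "[poly f (int x) = poly f (int y)] (mod int d)"
    using assms(5) by (intro poly_cong) (simp add: cong_int_iff)
  ultimately have "[int (\<pi> x) = int (\<pi> y)] (mod int d)"
    using assms(3,4) by (meson cong_sym cong_trans)
  then show ?thesis
    by (simp add: cong_int_iff)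
qed

lemma bij_betw_respecting_cong_iff:
  fixes \<sigma> :: "nat \<Rightarrow> nat"
  assumes bij: "bij_betw \<sigma> {0..<n} {0..<n}" and d: "d dvd n"
    and resp: "\<And>x y. x < n \<Longrightarrow> y < n \<Longrightarrow> [x = y] (mod d) \<Longrightarrow> [\<sigma> x = \<sigma> y] (mod d)"
    and xy: "x < n" "y < n"
  shows "[\<sigma> x = \<sigma> y] (mod d) \<longleftrightarrow> [x = y] (mod d)"
proof
  have "n > 0"
    using xy(1) by linarith
  with d have "d > 0" "d \<le> n"
    by (simp_all add: dvd_pos_nat dvd_imp_le)
  have resp_mod: "[\<sigma> (z mod d) = \<sigma> z] (mod d)" if "z < n" for z
    using that \<open>d > 0\<close> by (intro resp) (auto simp: cong_def intro: le_less_trans[OF mod_less_eq_dividend])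
  define h where "h r = \<sigma> r mod d" for r
  \<comment> \<open>\<open>\<sigma>\<close> induces a surjection, hence a bijection, of the residues modulo \<open>d\<close>\<close>
  have "{0..<d} \<subseteq> h ` {0..<d}"
  proof
    fix s assume s: "s \<in> {0..<d}"
    then have "s \<in> \<sigma> ` {0..<n}"
      using \<open>d \<le> n\<close> bij_betw_imp_surj_on[OF bij] by auto
    then obtain z where z: "z < n" "\<sigma> z = s"
      by auto
    then have "h (z mod d) = s"
      using resp_mod[OF z(1)] s by (simp add: h_def cong_def)
    then show "s \<in> h ` {0..<d}"
      using \<open>d > 0\<close> by force
  qed
  moreover have "h ` {0..<d} \<subseteq> {0..<d}"
    using \<open>d > 0\<close> by (auto simp: h_def)
  ultimately have "inj_on h {0..<d}"
    by (intro eq_card_imp_inj_on) (auto simp: subset_antisym)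
  moreover assume "[\<sigma> x = \<sigma> y] (mod d)"
  then have "h (x mod d) = h (y mod d)"
    using resp_mod xy by (simp add: h_def cong_def)
  ultimately show "[x = y] (mod d)"
    using \<open>d > 0\<close> by (auto simp: cong_def inj_on_def)
qed (use resp xy in blast)

lemma gcd_poly_perm_Zn_eq:
  assumes \<sigma>: "poly_perm_Zn n \<sigma>" "\<sigma> 0 = 0" and x: "x < n"
  shows "gcd (\<sigma> x) n = gcd x n"
proof -
  have bij: "bij_betw \<sigma> {0..<n} {0..<n}"
    using \<sigma>(1) by (simp add: poly_perm_Zn_def perm_Zn_def)
  have dvd_iff: "d dvd \<sigma> x \<longleftrightarrow> d dvd x" if "d dvd n" for d
  proof -
    have "[\<sigma> x = \<sigma> 0] (mod d) \<longleftrightarrow> [x = 0] (mod d)"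
      using x that by (intro bij_betw_respecting_cong_iff[OF bij] poly_perm_Zn_cong[OF \<sigma>(1)]) auto
    then show ?thesis
      by (simp add: \<sigma>(2) cong_0_iff)
  qed
  show ?thesis
    by (rule dvd_antisym) (metis dvd_iff gcd_dvd1 gcd_dvd2 gcd_greatest)+
qed

lemma divisors_eq_image_gcd:
  assumes "n > 0"
  shows "{d. d dvd n} = (\<lambda>x. gcd x n) ` {0..<(n::nat)}"
proof (intro subset_antisym subsetI)
  fix d assume "d \<in> {d. d dvd n}"
  then have d: "d dvd n" by simp
  show "d \<in> (\<lambda>x. gcd x n) ` {0..<n}"
  proof (cases "d = n")
    case True
    then show ?thesis
      using assms by (intro image_eqI[of _ _ 0]) auto
  next
    case False
    with d assms have "d < n"
      using dvd_imp_le le_neq_implies_less by blast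
    with d show ?thesis
      by (intro image_eqI[of _ _ d]) (simp_all add: gcd_nat.absorb1)
  qed
qed auto

lemma card_divisors_le_cyc:
  assumes "poly_perm_Zn n \<sigma>" "\<sigma> 0 = 0"
  shows "card {d. d dvd n} \<le> cyc n \<sigma>"
proof (cases "n = 0")
  case False
  have "bij_betw \<sigma> {0..<n} {0..<n}"
    using assms(1) by (simp add: poly_perm_Zn_def perm_Zn_def)
  then have "card ((\<lambda>x. gcd x n) ` {0..<n}) \<le> cyc n \<sigma>"
    using gcd_poly_perm_Zn_eq[OF assms] by (rule card_image_le_cyc_if_invariant)
  with False show ?thesis
    by (simp add: divisors_eq_image_gcd)
qed simp

lemma card_divisors_le_Max_cyc_shift_perm:
  assumes "poly_perm_Zn n \<pi>" "n > 0"
  shows "card {d. d dvd n} \<le> Max ((\<lambda>c. cyc n (shift_perm n \<pi> c)) ` {0..<n})"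
proof -
  have "\<pi> ` {0..<n} = {0..<n}"
    using assms(1) by (simp add: poly_perm_Zn_def perm_Zn_def bij_betw_def)
  then obtain c where c: "c < n" "\<pi> c = 0"
    using assms(2) by (metis atLeastLessThan_iff imageE le0)
  then have "card {d. d dvd n} \<le> cyc n (shift_perm n \<pi> c)"
    by (intro card_divisors_le_cyc poly_perm_Zn_shift_perm assms(1)) (simp add: shift_perm_def)
  also have "\<dots> \<le> Max ((\<lambda>c. cyc n (shift_perm n \<pi> c)) ` {0..<n})"
    using c by (intro Max_ge) auto
  finally show ?thesis .
qed

lemma card_divisors_le_c_poly: "card {d. d dvd n} \<le> c_poly n"
proof (cases "n = 0")
  case False
  let ?P = "\<lambda>b. \<exists>\<pi>. poly_perm_Zn n \<pi> \<and> b = Max ((\<lambda>c. cyc n (shift_perm n \<pi> c)) ` {0..<n})"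
  have "poly_perm_Zn n (\<lambda>x. 1 * x mod n)"
    by (rule poly_perm_Zn_mult) simp
  then have "?P (Max ((\<lambda>c. cyc n (shift_perm n (\<lambda>x. 1 * x mod n) c)) ` {0..<n}))"
    by blast
  then have "?P (c_poly n)"
    unfolding c_poly_def by (rule LeastI)
  with False show ?thesis
    using card_divisors_le_Max_cyc_shift_perm by auto
qed simp \<comment> \<open>for \<open>n = 0\<close> the set of divisors is infinite, so its \<open>card\<close> is \<open>0\<close>\<close>

lemma c_poly_le:
  assumes "poly_perm_Zn n \<pi>" "n > 0" "\<And>c. c < n \<Longrightarrow> cyc n (shift_perm n \<pi> c) \<le> b"
  shows "c_poly n \<le> b"
proof -
  have "c_poly n \<le> Max ((\<lambda>c. cyc n (shift_perm n \<pi> c)) ` {0..<n})"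
    unfolding c_poly_def using assms(1) by (intro Least_le) blast
  also have "\<dots> \<le> b"
    using assms(2,3) by (intro Max.boundedI) auto
  finally show ?thesis .
qed

lemma card_divisors_times_prime_power_ge:
  assumes p: "prime p" "odd p" and q: "q \<in> {1, 2}"
  shows "q * (k + 1) \<le> card {d. d dvd q * p ^ k}"
proof -
  let ?f = "\<lambda>(t, i). (t + 1) * p ^ i"
  have "p > 1"
    using p(1) by (rule prime_gt_1_nat)
  have inj: "inj_on ?f ({..<q} \<times> {..k})"
  proof (rule inj_onI)
    fix u u' assume u: "u \<in> {..<q} \<times> {..k}" "u' \<in> {..<q} \<times> {..k}" and eq: "?f u = ?f u'"
    obtain t i t' i' where tt: "u = (t, i)" "u' = (t', i')"
      by (cases u, cases u')
    from eq have eq': "(t + 1) * p ^ i = (t' + 1) * p ^ i'"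
      by (simp only: tt case_prod_conv)
    then have "even (t + 1) \<longleftrightarrow> even (t' + 1)"
      using p(2) by (metis even_mult_iff even_power)
    moreover have "t < 2" "t' < 2"
      using u q tt by auto
    ultimately have "t = t'"
      by (auto dest!: less_2_cases)
    with eq' have "(t' + 1) * p ^ i = (t' + 1) * p ^ i'"
      by (simp only:)
    then have "p ^ i = p ^ i'"
      by (subst (asm) mult_left_cancel) simp_all
    with \<open>t = t'\<close> \<open>p > 1\<close> show "u = u'"
      by (simp add: tt)
  qed
  have "(t + 1) * p ^ i dvd q * p ^ k" if "t < q" "i \<le> k" for t i
  proof (rule mult_dvd_mono)
    show "t + 1 dvd q"
      using that(1) q by (auto simp: less_Suc_eq numeral_2_eq_2)
    show "p ^ i dvd p ^ k"
      using that(2) by (rule le_imp_power_dvd)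
  qed
  then have sub: "?f ` ({..<q} \<times> {..k}) \<subseteq> {d. d dvd q * p ^ k}"
    by auto
  have fin: "finite {d. d dvd q * p ^ k}"
    using q \<open>p > 1\<close> by (intro finite_divisors_nat) auto
  have "q * (k + 1) = card (?f ` ({..<q} \<times> {..k}))"
    using inj by (simp add: card_image card_cartesian_product)
  also have "\<dots> \<le> card {d. d dvd q * p ^ k}"
    using fin sub by (rule card_mono)
  finally show ?thesis .
qed

section \<open>Affine permutations with a primitive root as multiplier\<close>

lemma residue_primroot_power_cong:
  assumes "residue_primroot n g" "coprime v (int n)"
  shows "\<exists>m. [int g ^ m = v] (mod int n)"
proof (cases "n = 1")
  case False
  then have "n > 1"
    using assms(1) by (simp add: residue_primroot_def)
  define r where "r = nat (v mod int n)"
  have r: "int r = v mod int n"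
    using \<open>n > 1\<close> by (simp add: r_def)
  have "coprime (int r) (int n)"
    unfolding r using assms(2) by (metis coprime_mod_left_iff mod_by_0)
  then have "coprime r n"
    by simp
  moreover have "v mod int n < int n"
    using \<open>n > 1\<close> by simp
  then have "r < n"
    using r by linarith
  moreover have "r \<noteq> 0"
    using \<open>coprime r n\<close> \<open>n > 1\<close> by (auto simp: r_def)
  ultimately have "r \<in> totatives n"
    by (simp add: totatives_def)
  then have "r \<in> (\<lambda>i. g ^ i mod n) ` {..<totient n}"
    using bij_betw_imp_surj_on[OF residue_primroot_is_generator[OF \<open>n > 1\<close> assms(1)]] by simp
  then obtain m where "g ^ m mod n = r"
    by blast
  then have "int g ^ m mod int n = v mod int n"
    by (metis r of_nat_mod of_nat_power)
  then show ?thesis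
    by (auto simp: cong_def)
qed simp

lemma residue_primroot_not_cong_one:
  assumes "residue_primroot n g" "odd n" "prime p" "p dvd n"
  shows "\<not> [int g = 1] (mod int p)"
proof
  assume g: "[int g = 1] (mod int p)"
  have "coprime 2 (int n)"
    using assms(2) by simp
  then obtain m where "[int g ^ m = 2] (mod int n)"
    using residue_primroot_power_cong[OF assms(1)] by blast
  then have "[int g ^ m = 2] (mod int p)"
    using assms(4) by (simp add: cong_dvd_modulus)
  moreover have "[int g ^ m = 1] (mod int p)"
    using cong_pow[OF g, of m] by simp
  ultimately have "[1 = 2] (mod int p)"
    by (meson cong_sym cong_trans)
  then have "int p dvd 1"
    by (simp add: cong_iff_dvd_diff)
  with assms(3) show False
    by simp
qed

lemma odd_residue_primroot_prime_power_exists: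
  assumes "prime p" "odd p" "k > 0"
  obtains a where "residue_primroot (p ^ k) a" "odd a"
proof -
  obtain g where g: "residue_primroot (p ^ k) g"
    using residue_primroot_odd_prime_power_exists[OF assms(1,2)] assms(3) by blast
  moreover have "residue_primroot (p ^ k) (g + p ^ k)"
    using g by (subst residue_primroot_cong[of _ g]) (simp_all add: cong_def)
  ultimately show ?thesis
    using that assms(2) by (cases "odd g") auto
qed

lemma cong_prime_power_times_coprime:
  fixes p :: nat
  assumes "prime p"
  shows "\<exists>j\<le>k. \<exists>v. coprime v p \<and> [p ^ j * v = w] (mod p ^ k)"
proof (cases "w mod p ^ k = 0")
  case True
  then have "coprime 1 p \<and> [p ^ k * 1 = w] (mod p ^ k)"
    by (simp add: cong_def)
  then show ?thesis
    by blast
next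
  case False
  let ?j = "multiplicity p (w mod p ^ k)"
  define v where "v = w mod p ^ k div p ^ ?j"
  have v: "w mod p ^ k = p ^ ?j * v" "\<not> p dvd v"
    unfolding v_def using prime_gt_1_nat[OF assms] False
    by (auto simp: multiplicity_dvd multiplicity_decompose)
  have "p ^ ?j \<le> w mod p ^ k"
    using v False by (metis dvd_imp_le dvd_triv_left neq0_conv)
  also have "\<dots> < p ^ k"
    using prime_gt_0_nat[OF assms] by simp
  finally have "?j \<le> k"
    using prime_gt_1_nat[OF assms] by (simp add: power_strict_increasing_iff)
  moreover have "coprime v p"
    using v(2) assms by (simp add: prime_imp_coprime coprime_commute)
  moreover have "[p ^ ?j * v = w] (mod p ^ k)"
    using v(1) by (simp add: cong_def)
  ultimately show ?thesis
    by blast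
qed

lemma affine_fixed_point_mod:
  fixes A B :: int
  assumes "coprime (A - 1) P" "q dvd A - 1"
  obtains x0 where "P dvd (A - 1) * x0 + B" "q * P dvd (A - 1) * ((A - 1) * x0 + B)"
proof -
  obtain s where "[(A - 1) * s = 1] (mod P)"
    using cong_solve_coprime_int assms(1) by blast
  then have "P dvd 1 - (A - 1) * s"
    by (simp add: cong_iff_dvd_diff dvd_diff_commute)
  then have "P dvd B * (1 - (A - 1) * s)"
    by (rule dvd_mult)
  then have "P dvd (A - 1) * (- B * s) + B"
    by (simp add: algebra_simps)
  moreover from this have "q * P dvd (A - 1) * ((A - 1) * (- B * s) + B)"
    using assms(2) by (rule mult_dvd_mono[rotated])
  ultimately show ?thesis
    by (rule that)
qed

lemma funpow_affine_mod:
  fixes \<sigma> :: "nat \<Rightarrow> nat" and A B x0 :: int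
  assumes \<sigma>: "\<And>x. x < n \<Longrightarrow> int (\<sigma> x) = (A * int x + B) mod int n"
    and dvd: "int n dvd (A - 1) * ((A - 1) * x0 + B)" and x: "x < n"
  shows "int ((\<sigma> ^^ m) x) = (x0 + A ^ m * (int x - x0) + int m * ((A - 1) * x0 + B)) mod int n"
\<comment> \<open>conjugated by the translation by \<open>x0\<close>, the map becomes \<open>y \<mapsto> A y + e\<close>\<close>
proof (induction m)
  case (Suc m)
  define e where "e = (A - 1) * x0 + B"
  define Z where "Z = x0 + A ^ m * (int x - x0) + int m * e"
  have "int ((\<sigma> ^^ m) x) = Z mod int n"
    using Suc by (simp add: Z_def e_def)
  moreover have "n > 0"
    using x by simp
  ultimately have "(\<sigma> ^^ m) x < n"
    by (metis of_nat_less_iff of_nat_0_less_iff pos_mod_bound)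
  then have "int ((\<sigma> ^^ Suc m) x) = (A * (Z mod int n) + B) mod int n"
    using \<sigma> \<open>int ((\<sigma> ^^ m) x) = Z mod int n\<close> by simp
  also have "\<dots> = (A * Z + B) mod int n"
    by (metis mod_add_left_eq mod_mult_right_eq)
  also have "\<dots> = (x0 + A ^ Suc m * (int x - x0) + int (Suc m) * e) mod int n"
  proof -
    have "(A * Z + B) - (x0 + A ^ Suc m * (int x - x0) + int (Suc m) * e) = int m * ((A - 1) * e)"
      by (simp add: Z_def e_def algebra_simps)
    then show ?thesis
      using dvd by (simp add: mod_eq_dvd_iff e_def)
  qed
  finally show ?case
    by (simp add: e_def)
qed (simp add: x)

lemma cong_add_mult_odd_exists:
  fixes X x c :: int
  assumes "q \<in> {1, 2}" "odd c"
  obtains t where "t < q" "[X + int t * c = x] (mod int q)"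
proof (cases "[X = x] (mod int q)")
  case True
  then show ?thesis
    using that[of 0] assms(1) by auto
next
  case False
  then have "q = 2"
    using assms(1) by auto
  with False assms(2) have "[X + c = x] (mod int q)"
    by (auto simp: cong_iff_dvd_diff)
  then show ?thesis
    using that[of 1] \<open>q = 2\<close> by simp
qed

lemma primroot_affine_orbit_cover:
  fixes x0 e x :: int
  assumes p: "prime p" "odd p" and a: "residue_primroot (p ^ k) a" "odd a"
    and q: "q \<in> {1, 2}" and e: "int (p ^ k) dvd e"
  shows "\<exists>j\<le>k. \<exists>t<q. \<exists>m.
           [x0 + int a ^ m * (int p ^ j + int t * int (p ^ k)) + int m * e = x] (mod int (q * p ^ k))"
proof -
  let ?P = "int (p ^ k)"
  obtain j v where j: "j \<le> k" and v: "coprime v p" "[p ^ j * v = nat ((x - x0) mod ?P)] (mod p ^ k)"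
    using cong_prime_power_times_coprime[OF p(1)] by blast
  have "[int v * int p ^ j = (x - x0) mod ?P] (mod ?P)"
    using v(2) p(1) by (simp add: cong_int_iff[symmetric] prime_gt_0_nat mult.commute)
  then have jv: "[int v * int p ^ j = x - x0] (mod ?P)"
    by (simp add: cong_def)
  have "coprime (int v) ?P"
    using v(1) by simp
  then obtain m where "[int a ^ m = int v] (mod ?P)"
    using residue_primroot_power_cong[OF a(1)] by blast
  then have am: "[int a ^ m * int p ^ j = x - x0] (mod ?P)"
    using cong_trans[OF cong_mult[OF _ cong_refl] jv] by blast
  define X0 where "X0 = x0 + int a ^ m * int p ^ j + int m * e"
  have "[X0 = x0 + (x - x0) + 0] (mod ?P)"
    unfolding X0_def using am e by (intro cong_add cong_refl) (simp_all add: cong_0_iff)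
  then have X0: "[X0 = x] (mod ?P)"
    by simp
  obtain t where t: "t < q" "[X0 + int t * (int a ^ m * ?P) = x] (mod int q)"
    using cong_add_mult_odd_exists[OF q, of "int a ^ m * ?P"] a(2) p(2) by auto
  have "[X0 + int t * (int a ^ m * ?P) = x + 0] (mod ?P)"
    using X0 by (intro cong_add) (simp_all add: cong_0_iff)
  with t(2) have "[X0 + int t * (int a ^ m * ?P) = x] (mod int q * ?P)"
    using q p(2) by (intro coprime_cong_mult) auto
  then have "[x0 + int a ^ m * (int p ^ j + int t * ?P) + int m * e = x] (mod int (q * p ^ k))"
    by (simp add: X0_def algebra_simps)
  with j t(1) show ?thesis
    by blast
qed

lemma primroot_affine_orbit_representatives:
  fixes \<sigma> :: "nat \<Rightarrow> nat" and B :: int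
  assumes p: "prime p" "odd p" "k > 0" and a: "residue_primroot (p ^ k) a" "odd a"
    and q: "q \<in> {1, 2}"
    and \<sigma>: "\<And>x. x < q * p ^ k \<Longrightarrow> int (\<sigma> x) = (int a * int x + B) mod int (q * p ^ k)"
  obtains x0 where "\<And>x. x < q * p ^ k \<Longrightarrow> \<exists>j\<le>k. \<exists>t<q. \<exists>m.
    (\<sigma> ^^ m) (nat ((x0 + int p ^ j + int t * int (p ^ k)) mod int (q * p ^ k))) = x"
proof -
  let ?n = "q * p ^ k"
  have "\<not> int p dvd int a - 1"
    using residue_primroot_not_cong_one[OF a(1)] p by (simp add: cong_iff_dvd_diff)
  then have "coprime (int a - 1) (int (p ^ k))"
    using p(1) by (simp add: prime_imp_coprime coprime_commute)
  moreover have "int q dvd int a - 1"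
    using q a(2) by auto
  ultimately obtain x0 where e: "int (p ^ k) dvd (int a - 1) * x0 + B"
    and ndvd: "int q * int (p ^ k) dvd (int a - 1) * ((int a - 1) * x0 + B)"
    by (rule affine_fixed_point_mod)
  define e where "e = (int a - 1) * x0 + B"
  have "\<exists>j\<le>k. \<exists>t<q. \<exists>m. (\<sigma> ^^ m) (nat ((x0 + int p ^ j + int t * int (p ^ k)) mod int ?n)) = x"
    if "x < ?n" for x
  proof -
    from primroot_affine_orbit_cover[OF p(1,2) a q e[folded e_def], of x0 "int x"]
    obtain j t m where jt: "j \<le> k" "t < q"
      and m: "[x0 + int a ^ m * (int p ^ j + int t * int (p ^ k)) + int m * e = int x] (mod int ?n)"
      by blast
    define r where "r = nat ((x0 + int p ^ j + int t * int (p ^ k)) mod int ?n)"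
    from that have "0 < int ?n"
      by (simp only: of_nat_0_less_iff)
    then have "r < ?n"
      by (simp add: r_def nat_less_iff)
    from \<open>0 < int ?n\<close> have "int r = (x0 + int p ^ j + int t * int (p ^ k)) mod int ?n"
      by (simp add: r_def)
    then have "[int r - x0 = int p ^ j + int t * int (p ^ k)] (mod int ?n)"
      by (simp add: cong_def mod_diff_left_eq)
    then have "[x0 + int a ^ m * (int r - x0) + int m * e
        = x0 + int a ^ m * (int p ^ j + int t * int (p ^ k)) + int m * e] (mod int ?n)"
      by (intro cong_add cong_mult cong_refl)
    with m have "[x0 + int a ^ m * (int r - x0) + int m * e = int x] (mod int ?n)"
      by (rule cong_trans[rotated])
    then have "int ((\<sigma> ^^ m) r) = int x mod int ?n"
      using funpow_affine_mod[OF \<sigma> _ \<open>r < ?n\<close>] ndvd by (simp add: e_def cong_def)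
    also have "\<dots> = int x"
      using that by (metis mod_less of_nat_mod)
    finally show ?thesis
      using jt by (auto simp: r_def)
  qed
  then show ?thesis
    by (rule that)
qed

lemma cyc_affine_primroot_le:
  fixes \<sigma> :: "nat \<Rightarrow> nat" and B :: int
  assumes p: "prime p" "odd p" "k > 0" and a: "residue_primroot (p ^ k) a" "odd a"
    and q: "q \<in> {1, 2}" and bij: "bij_betw \<sigma> {0..<q * p ^ k} {0..<q * p ^ k}"
    and \<sigma>: "\<And>x. x < q * p ^ k \<Longrightarrow> int (\<sigma> x) = (int a * int x + B) mod int (q * p ^ k)"
  shows "cyc (q * p ^ k) \<sigma> \<le> q * (k + 1)"
proof -
  let ?n = "q * p ^ k"
  obtain x0 where x0: "\<And>x. x < ?n \<Longrightarrow> \<exists>j\<le>k. \<exists>t<q. \<exists>m.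
      (\<sigma> ^^ m) (nat ((x0 + int p ^ j + int t * int (p ^ k)) mod int ?n)) = x"
    using primroot_affine_orbit_representatives[OF p a q \<sigma>] by blast
  define R where "R = (\<lambda>(j, t). nat ((x0 + int p ^ j + int t * int (p ^ k)) mod int ?n)) ` ({..k} \<times> {..<q})"
  have "?n > 0"
    using q p(1) by (auto simp: prime_gt_0_nat)
  then have "R \<subseteq> {0..<?n}"
    by (auto simp: R_def nat_less_iff)
  moreover have "\<exists>r\<in>R. \<exists>m. (\<sigma> ^^ m) r = x" if "x < ?n" for x
    using x0[OF that] unfolding R_def by fast
  ultimately have "cyc ?n \<sigma> \<le> card R"
    by (rule cyc_le_card_if_orbits_cover[OF bij])
  also have "\<dots> \<le> card ({..k} \<times> {..<q})"
    unfolding R_def by (rule card_image_le) simp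
  also have "\<dots> = q * (k + 1)"
    by (simp add: card_cartesian_product)
  finally show ?thesis .
qed

lemma int_shift_perm_mult:
  "int (shift_perm n (\<lambda>x. a * x mod n) c x) = (int a * int x + int a * int c) mod int n"
proof -
  have "int (shift_perm n (\<lambda>x. a * x mod n) c x) = int a * (int (x + c) mod int n) mod int n"
    by (simp add: shift_perm_def of_nat_mod)
  also have "\<dots> = int a * int (x + c) mod int n"
    by (rule mod_mult_right_eq)
  finally show ?thesis
    by (simp add: distrib_left)
qed

lemma c_poly_times_odd_prime_power:
  assumes "prime p" "odd p" "k > 0" "q \<in> {1, 2}"
  shows "c_poly (q * p ^ k) = q * (k + 1)"
proof (rule antisym)
  obtain a where a: "residue_primroot (p ^ k) a" "odd a"
    using odd_residue_primroot_prime_power_exists[OF assms(1-3)] .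
  have "coprime a (q * p ^ k)"
    using a assms(4) by (auto simp: residue_primroot_def coprime_commute)
  then have \<pi>: "poly_perm_Zn (q * p ^ k) (\<lambda>x. a * x mod (q * p ^ k))"
    by (rule poly_perm_Zn_mult)
  have "cyc (q * p ^ k) (shift_perm (q * p ^ k) (\<lambda>x. a * x mod (q * p ^ k)) c) \<le> q * (k + 1)" for c
    using poly_perm_Zn_shift_perm[OF \<pi>, of c] int_shift_perm_mult
    by (intro cyc_affine_primroot_le[OF assms(1-3) a assms(4), where B = "int a * int c"])
      (simp_all add: poly_perm_Zn_def perm_Zn_def)
  with \<pi> show "c_poly (q * p ^ k) \<le> q * (k + 1)"
    using assms(1,4) by (intro c_poly_le) (auto simp: prime_gt_0_nat)
  show "q * (k + 1) \<le> c_poly (q * p ^ k)"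
    using card_divisors_times_prime_power_ge[OF assms(1,2,4)] card_divisors_le_c_poly by (rule le_trans)
qed

theorem corollary5p4:
  fixes p k :: nat
  assumes "prime p" and "p \<ge> 3" and "k \<ge> 1"
  shows "c_poly (p ^ k) = k + 1 \<and> c_poly (2 * p ^ k) = 2 * (k + 1)"
proof -
  have "odd p"
    using assms(1,2) by (simp add: prime_odd_nat)
  then show ?thesis
    using c_poly_times_odd_prime_power[of p k 1] c_poly_times_odd_prime_power[of p k 2] assms by simp
qed

end
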